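(* Let $\mathcal{X},\mathcal{Y}$ be finite sets and $P$ a joint probability mass function on $\mathcal{X}\times\mathcal{Y}$ with $P(x,y)>0$ for all $(x,y)$. For every conditional guessing function $G(\cdot|\cdot)$, every $\rho>0$ and every $q\in\mathbb{R}$, $$ E_q[G(X|Y)^\rho]\;\geq\;(1+\ln|\mathcal{X}|)^{-\rho}\,\frac{\sum_{y\in\mathcal{Y}}\left[\sum_{x\in\mathcal{X}}P(x,y)^{\frac{q}{1+\rho}}\right]^{1+\rho}}{\sum_{y\in\mathcal{Y}}\sum_{x\in\mathcal{X}}P(x,y)^q}. $$
   Context: A conditional guessing function is a map $G(\cdot|\cdot)$ on $\mathcal{X}\times\mathcal{Y}$ such that for each $y\in\mathcal{Y}$, $x\mapsto G(x|y)$ is a bijection from $\mathcal{X}$ onto $\{1,\dots,|\mathcal{X}|\}$. For $q\in\mathbb{R}$ and a function $F$ on $\mathcal{X}\times\mathcal{Y}$, the $q$-normalized expectation under $P$ is $E_q[F(X,Y)]=\frac{\sum_{x,y}F(x,y)P(x,y)^q}{\sum_{x,y}P(x,y)^q}$. *)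

theory Defs
  imports "HOL-Analysis.Analysis"
begin

text \<open>A conditional guessing function on X \<times> Y: for each y in Y, x \<mapsto> G x y is a
  bijection from X onto {1,...,|X|}.  G x y stands for G(x|y).\<close>
definition cond_guessing_function :: "'a set \<Rightarrow> 'b set \<Rightarrow> ('a \<Rightarrow> 'b \<Rightarrow> nat) \<Rightarrow> bool" where
  "cond_guessing_function X Y G \<longleftrightarrow> (\<forall>y\<in>Y. bij_betw (\<lambda>x. G x y) X {1..card X})"

definition q_expectation :: "'a set \<Rightarrow> 'b set \<Rightarrow> ('a \<Rightarrow> 'b \<Rightarrow> real) \<Rightarrow> real \<Rightarrow> ('a \<Rightarrow> 'b \<Rightarrow> real) \<Rightarrow> real" where
  "q_expectation X Y P q F =
     (\<Sum>(x,y)\<in>X \<times> Y. F x y * P x y powr q) / (\<Sum>(x,y)\<in>X \<times> Y. P x y powr q)"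

end

theory Submission
  imports Defs
begin

text \<open>For a fixed side information y, write a x = P(x,y)^(q/(1+\<rho>)) and g = G(\<cdot>|y).
  The weights 1/(g x \<cdot> H_n), with H_n the n-th harmonic number, sum to 1 because g
  enumerates {1..n}; Jensen's inequality for t \<mapsto> t^(1+\<rho>) applied to the points
  a x \<cdot> g x \<cdot> H_n then yields (\<Sum> a)^(1+\<rho>) \<le> H_n^\<rho> \<cdot> \<Sum> g^\<rho> a^(1+\<rho>).
  Bounding H_n \<le> 1 + ln n and summing over y gives the theorem.\<close>

lemma harm_le_one_plus_ln: "n > 0 \<Longrightarrow> (harm n :: real) \<le> 1 + ln (real n)"
  using euler_mascheroni_sequence_decreasing[of 1 n] by (simp add: harm_def)

lemma harm_card_eq_sum_inverse:
  assumes "bij_betw g X {1..card X}"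
  shows "(harm (card X) :: real) = (\<Sum>x\<in>X. 1 / real (g x))"
  unfolding harm_def using sum.reindex_bij_betw[OF assms, of "\<lambda>k. inverse (real k)"]
  by (simp add: divide_inverse)

lemma sum_powr_le_harm_powr_mult_sum:
  fixes g :: "'a \<Rightarrow> nat" and a :: "'a \<Rightarrow> real"
  assumes fin: "finite X" and bij: "bij_betw g X {1..card X}"
    and apos: "\<And>x. x \<in> X \<Longrightarrow> a x > 0" and rho: "\<rho> \<ge> 0"
  shows "(\<Sum>x\<in>X. a x) powr (1 + \<rho>)
         \<le> harm (card X) powr \<rho> * (\<Sum>x\<in>X. real (g x) powr \<rho> * a x powr (1 + \<rho>))"
proof (cases "X = {}")
  case False
  define H :: real where "H = harm (card X)"
  have Hpos: "H > 0" unfolding H_def using fin False by (simp add: card_gt_0_iff)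
  have gpos: "real (g x) > 0" if "x \<in> X" for x
    using bij_betwE[OF bij] that by fastforce
  define w where "w x = 1 / (real (g x) * H)" for x
  define z where "z x = a x * real (g x) * H" for x
  have "(\<Sum>x\<in>X. w x) = (\<Sum>x\<in>X. 1 / real (g x)) / H"
    unfolding w_def sum_divide_distrib by simp
  then have weights: "(\<Sum>x\<in>X. w x) = 1"
    using Hpos harm_card_eq_sum_inverse[OF bij] by (simp add: H_def)
  have "(\<Sum>x\<in>X. w x *\<^sub>R z x) powr (1 + \<rho>) \<le> (\<Sum>x\<in>X. w x * z x powr (1 + \<rho>))"
    by (rule convex_on_sum[OF fin False powr_convex weights])
      (use rho gpos Hpos apos in \<open>auto simp: w_def z_def\<close>)
  moreover have "(\<Sum>x\<in>X. w x *\<^sub>R z x) = (\<Sum>x\<in>X. a x)"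
    by (rule sum.cong) (use gpos Hpos in \<open>auto simp: w_def z_def\<close>)
  moreover have "w x * z x powr (1 + \<rho>) = H powr \<rho> * (real (g x) powr \<rho> * a x powr (1 + \<rho>))"
    if "x \<in> X" for x
    using apos[OF that] gpos[OF that] Hpos
    by (simp add: w_def z_def powr_mult powr_add field_simps)
  ultimately show ?thesis
    unfolding H_def sum_distrib_left by (simp cong: sum.cong)
qed simp

lemma guessing_moment_lower_bound:
  fixes g :: "'a \<Rightarrow> nat" and p :: "'a \<Rightarrow> real"
  assumes fin: "finite X" and bij: "bij_betw g X {1..card X}"
    and ppos: "\<And>x. x \<in> X \<Longrightarrow> p x > 0" and rho: "\<rho> \<ge> 0"
  shows "(1 + ln (real (card X))) powr (-\<rho>) * (\<Sum>x\<in>X. p x powr (q / (1 + \<rho>))) powr (1 + \<rho>)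
         \<le> (\<Sum>x\<in>X. real (g x) powr \<rho> * p x powr q)"
proof (cases "X = {}")
  case False
  define H :: real where "H = harm (card X)"
  define A where "A = (\<Sum>x\<in>X. p x powr (q / (1 + \<rho>))) powr (1 + \<rho>)"
  define S where "S = (\<Sum>x\<in>X. real (g x) powr \<rho> * p x powr q)"
  have cX: "card X > 0" using fin False by (simp add: card_gt_0_iff)
  then have Hpos: "H > 0" by (simp add: H_def)
  have "(p x powr (q / (1 + \<rho>))) powr (1 + \<rho>) = p x powr q" for x
    using rho by (simp add: powr_powr)
  moreover have "A \<le> H powr \<rho> * (\<Sum>x\<in>X. real (g x) powr \<rho> * (p x powr (q / (1 + \<rho>))) powr (1 + \<rho>))"
    unfolding A_def H_def using ppos by (intro sum_powr_le_harm_powr_mult_sum[OF fin bij _ rho]) force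
  ultimately have jensen: "A \<le> H powr \<rho> * S"
    by (simp add: S_def)
  have "(1 + ln (real (card X))) powr (-\<rho>) \<le> H powr (-\<rho>)"
    by (rule powr_mono2') (use rho Hpos harm_le_one_plus_ln[OF cX] in \<open>auto simp: H_def\<close>)
  then have "(1 + ln (real (card X))) powr (-\<rho>) * A \<le> H powr (-\<rho>) * A"
    by (rule mult_right_mono) (simp add: A_def)
  also have "\<dots> \<le> H powr (-\<rho>) * (H powr \<rho> * S)"
    by (rule mult_left_mono[OF jensen]) simp
  also have "\<dots> = S"
    using Hpos by (simp add: mult.assoc[symmetric] powr_add[symmetric])
  finally show ?thesis unfolding A_def S_def .
qed simp

lemma q_expectation_iterated:
  "q_expectation X Y P q F
   = (\<Sum>y\<in>Y. \<Sum>x\<in>X. F x y * P x y powr q) / (\<Sum>y\<in>Y. \<Sum>x\<in>X. P x y powr q)"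
  unfolding q_expectation_def
  by (simp add: sum.cartesian_product[symmetric] sum.swap[of _ X Y])

theorem theorem2:
  fixes X :: "'a set" and Y :: "'b set" and P :: "'a \<Rightarrow> 'b \<Rightarrow> real"
    and G :: "'a \<Rightarrow> 'b \<Rightarrow> nat" and \<rho> q :: real
  assumes "finite X" and "finite Y"
    and "\<forall>x\<in>X. \<forall>y\<in>Y. P x y > 0"
    and "(\<Sum>(x,y)\<in>X \<times> Y. P x y) = 1"
    and "cond_guessing_function X Y G"
    and "\<rho> > 0"
  shows "q_expectation X Y P q (\<lambda>x y. real (G x y) powr \<rho>)
         \<ge> (1 + ln (real (card X))) powr (-\<rho>) *
           ((\<Sum>y\<in>Y. (\<Sum>x\<in>X. P x y powr (q / (1 + \<rho>))) powr (1 + \<rho>))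
            / (\<Sum>y\<in>Y. \<Sum>x\<in>X. P x y powr q))"
proof -
  have "(1 + ln (real (card X))) powr (-\<rho>) * (\<Sum>x\<in>X. P x y powr (q / (1 + \<rho>))) powr (1 + \<rho>)
        \<le> (\<Sum>x\<in>X. real (G x y) powr \<rho> * P x y powr q)" if "y \<in> Y" for y
    using assms that unfolding cond_guessing_function_def
    by (intro guessing_moment_lower_bound) auto
  then have "(1 + ln (real (card X))) powr (-\<rho>) *
               (\<Sum>y\<in>Y. (\<Sum>x\<in>X. P x y powr (q / (1 + \<rho>))) powr (1 + \<rho>))
             \<le> (\<Sum>y\<in>Y. \<Sum>x\<in>X. real (G x y) powr \<rho> * P x y powr q)"
    unfolding sum_distrib_left by (rule sum_mono)
  then show ?thesis
    unfolding q_expectation_iterated times_divide_eq_right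
    by (rule divide_right_mono) (simp add: sum_nonneg)
qed

end
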